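(* Let $\Bbbk$ be a field, $n\ge2$, $q\in\Bbbk$ a primitive $n$-th root of unity, $T_n(q)$ the Taft algebra and $A$ a unital associative $\Bbbk$-algebra. Let $\cdot:T_n(q)\otimes A\to A$ be a partial action with $g\cdot1_A=0$. Then: (i) $(x\cdot1_A)^n\in Z(A)$; (ii) $g^i\cdot(x\cdot1_A)=q^{-i}(g^i\cdot1_A)(x\cdot1_A)$ for all $0\le i\le n-1$; (iii) if there is $i\in\{2,\dots,n-1\}$ such that $g^i\cdot a=a$ for all $a\in A$, then $x\cdot1_A=0$.
   Context: The Taft algebra $T_n(q)$ is the Hopf algebra generated by $g,x$ with relations $g^n=1$, $x^n=0$, $xg=qgx$, $g$ group-like, $\Delta(x)=x\otimes1+g\otimes x$, $\varepsilon(x)=0$. $Z(A)$ is the center of $A$. A partial action of a bialgebra $H$ on $A$ is a linear map $\cdot:H\otimes A\to A$ with $1_H\cdot a=a$, $h\cdot(ab)=(h_1\cdot a)(h_2\cdot b)$, $h\cdot(k\cdot a)=(h_1\cdot1_A)(h_2k\cdot a)$. *)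

theory Defs
  imports Main
begin

fun qbinom :: "'k::field \<Rightarrow> nat \<Rightarrow> nat \<Rightarrow> 'k" where
  "qbinom q j 0 = 1"
| "qbinom q 0 (Suc m) = 0"
| "qbinom q (Suc j) (Suc m) = qbinom q j m + q ^ (Suc m) * qbinom q j (Suc m)"

definition primitive_root :: "'k::field \<Rightarrow> nat \<Rightarrow> bool" where
  "primitive_root q n \<longleftrightarrow> q ^ n = 1 \<and> (\<forall>k. 0 < k \<and> k < n \<longrightarrow> q ^ k \<noteq> 1)"

text \<open>Elements of T_n(q) are coefficient functions h on the basis g^i x^j, (i,j) in
  {..<n} x {..<n}; values outside that index set are ignored.\<close>

definition tidx :: "nat \<Rightarrow> (nat \<times> nat) set" where
  "tidx n = {..<n} \<times> {..<n}"

definition tbas :: "nat \<times> nat \<Rightarrow> nat \<times> nat \<Rightarrow> 'k::field" where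
  "tbas r = (\<lambda>p. if p = r then 1 else 0)"

text \<open>(g^i x^j)(g^k x^l) = q^(jk) g^(i+k) x^(j+l) (zero if j+l >= n).\<close>
definition tbasis_mul :: "nat \<Rightarrow> 'k::field \<Rightarrow> nat \<times> nat \<Rightarrow> nat \<times> nat \<Rightarrow> nat \<times> nat \<Rightarrow> 'k" where
  "tbasis_mul n q r s = (case r of (i, j) \<Rightarrow> case s of (k, l) \<Rightarrow>
     (\<lambda>p. if j + l < n \<and> p = ((i + k) mod n, j + l) then q ^ (j * k) else 0))"

definition tmul :: "nat \<Rightarrow> 'k::field \<Rightarrow> (nat \<times> nat \<Rightarrow> 'k) \<Rightarrow> (nat \<times> nat \<Rightarrow> 'k) \<Rightarrow> nat \<times> nat \<Rightarrow> 'k" where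
  "tmul n q h h' = (\<lambda>p. \<Sum>r\<in>tidx n. \<Sum>s\<in>tidx n. h r * h' s * tbasis_mul n q r s p)"

text \<open>Comultiplication: Delta(g^i x^j) = sum_{m<=j} [j choose m]_q g^(i+m) x^(j-m) (x) g^i x^m,
  the unique algebra map with Delta(g) = g(x)g and Delta(x) = x(x)1 + g(x)x.
  An element of T (x) T is a coefficient function on pairs of basis indices.\<close>
definition tdelta :: "nat \<Rightarrow> 'k::field \<Rightarrow> (nat \<times> nat \<Rightarrow> 'k) \<Rightarrow> (nat \<times> nat) \<times> (nat \<times> nat) \<Rightarrow> 'k" where
  "tdelta n q h = (\<lambda>(p, r). \<Sum>(i, j)\<in>tidx n. h (i, j) *
      (\<Sum>m\<le>j. if p = ((i + m) mod n, j - m) \<and> r = (i, m) then qbinom q j m else 0))"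

definition kalgebra :: "('k::field \<Rightarrow> 'a::{ring, monoid_mult} \<Rightarrow> 'a) \<Rightarrow> bool" where
  "kalgebra smul \<longleftrightarrow>
     (\<forall>c a b. smul c (a + b) = smul c a + smul c b) \<and>
     (\<forall>c d a. smul (c + d) a = smul c a + smul d a) \<and>
     (\<forall>c d a. smul (c * d) a = smul c (smul d a)) \<and>
     (\<forall>a. smul 1 a = a) \<and>
     (\<forall>c a b. smul c (a * b) = smul c a * b) \<and>
     (\<forall>c a b. smul c (a * b) = a * smul c b)"

text \<open>act (i,j) a is (g^i x^j) . a; it is extended linearly in the first argument by pact.\<close>
definition pact :: "nat \<Rightarrow> ('k::field \<Rightarrow> 'a \<Rightarrow> 'a::{ring, monoid_mult}) \<Rightarrow> (nat \<times> nat \<Rightarrow> 'a \<Rightarrow> 'a)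
     \<Rightarrow> (nat \<times> nat \<Rightarrow> 'k) \<Rightarrow> 'a \<Rightarrow> 'a" where
  "pact n smul act h a = (\<Sum>r\<in>tidx n. smul (h r) (act r a))"

definition taft_partial_action ::
  "nat \<Rightarrow> 'k::field \<Rightarrow> ('k \<Rightarrow> 'a \<Rightarrow> 'a::{ring, monoid_mult}) \<Rightarrow> (nat \<times> nat \<Rightarrow> 'a \<Rightarrow> 'a) \<Rightarrow> bool" where
  "taft_partial_action n q smul act \<longleftrightarrow>
     \<comment> \<open>bilinearity (linearity in the algebra argument for each basis element)\<close>
     (\<forall>r a b. act r (a + b) = act r a + act r b) \<and>
     (\<forall>r c a. act r (smul c a) = smul c (act r a)) \<and>
     \<comment> \<open>1_H . a = a\<close>
     (\<forall>a. act (0, 0) a = a) \<and>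
     \<comment> \<open>h . (ab) = (h1 . a)(h2 . b)\<close>
     (\<forall>h a b. pact n smul act h (a * b) =
        (\<Sum>(p, r)\<in>tidx n \<times> tidx n. smul (tdelta n q h (p, r)) (act p a * act r b))) \<and>
     \<comment> \<open>h . (k . a) = (h1 . 1)(h2 k . a)\<close>
     (\<forall>h k a. pact n smul act h (pact n smul act k a) =
        (\<Sum>(p, r)\<in>tidx n \<times> tidx n. smul (tdelta n q h (p, r))
            (act p 1 * pact n smul act (tmul n q (tbas r) k) a)))"

end

theory Submission
  imports Defs
begin

(*
  Put y = x.1.  Since Delta g = g (x) g, each g^i acts multiplicatively, so g.1 = 0 forces
  g^(n-1).1 = 0 and hence g^(n-1) acts by zero; then g^(n-1) x acts as right multiplication by
  g^(n-1)x.1, which equals -q y because g^(n-1)x.(g.1) = 0.  Evaluating g^(n-1)x.(g^(i+1)x^j.a)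
  in two ways gives the twisted commutator recursion
    g^i x^(j+1).a = q^(-i) (y (g^i x^j.a) - (g^(i+1)x^j.a) y).
  Iterated n times it expands with Gaussian binomial coefficients in q^(-1), whose middle terms
  vanish at a primitive root of unity; as x^n = 0 this leaves y^n a + c a y^n = 0 for a scalar c,
  and a = 1 shows that y^n is central.  For j = 0 the recursion gives (ii), since e = g^i.1
  satisfies e b e = e b and e (g^(i+1).1) = 0.  If g^i acts trivially, (ii) reads y = q^(-i) y,
  whence (iii).
*)

section \<open>Roots of unity and Gaussian binomial coefficients\<close>

lemma power_mod_if_power_eq_1:
  fixes x :: "'a::monoid_mult"
  assumes "x ^ n = 1"
  shows "x ^ (m mod n) = x ^ m"
proof -
  have "x ^ m = x ^ (n * (m div n) + m mod n)" by simp
  also have "\<dots> = x ^ (m mod n)" by (simp only: power_add power_mult assms power_one mult_1_left)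
  finally show ?thesis by (rule sym)
qed

lemma primitive_root_nonzero: "primitive_root q n \<Longrightarrow> 0 < n \<Longrightarrow> q \<noteq> 0"
  by (auto simp: primitive_root_def zero_power)

lemma primitive_root_inverse: "primitive_root q n \<Longrightarrow> primitive_root (inverse q) n"
  by (simp add: primitive_root_def power_inverse)

lemma qbinom_eq_0: "j < m \<Longrightarrow> qbinom q j m = 0"
proof (induction j arbitrary: m)
  case 0 then show ?case by (cases m) auto
next
  case (Suc j) then show ?case by (cases m) auto
qed

lemma qbinom_self [simp]: "qbinom q j j = 1"
  by (induction j) (auto simp: qbinom_eq_0)

text \<open>The second q-Pascal rule, multiplied by \<open>q ^ m\<close> to avoid a truncated exponent \<open>j - m\<close>.\<close>

lemma qbinom_Suc_Suc': "q ^ m * qbinom q (Suc j) (Suc m) = q ^ j * qbinom q j m + q ^ m * qbinom q j (Suc m)"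
proof (induction j arbitrary: m)
  case 0 then show ?case by (cases m) (auto simp: qbinom_eq_0)
next
  case (Suc j)
  note IH = Suc.IH
  show ?case
  proof (cases m)
    case 0
    then show ?thesis using IH[of 0] by (simp add: algebra_simps)
  next
    case (Suc k)
    have "q ^ m * qbinom q (Suc (Suc j)) (Suc m)
        = q * (q ^ k * qbinom q (Suc j) (Suc k)) + q ^ Suc m * (q ^ m * qbinom q (Suc j) (Suc m))"
      unfolding qbinom.simps(3)[of q "Suc j"] Suc by (simp add: algebra_simps del: qbinom.simps)
    also have "\<dots> = q * (q ^ j * qbinom q j k + q ^ k * qbinom q j m)
        + q ^ Suc m * (q ^ j * qbinom q j m + q ^ m * qbinom q j (Suc m))"
      unfolding Suc IH ..
    also have "\<dots> = q ^ Suc j * (qbinom q j k + q ^ m * qbinom q j m)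
        + q ^ m * (qbinom q j m + q ^ Suc m * qbinom q j (Suc m))"
      unfolding Suc by (simp add: algebra_simps del: qbinom.simps)
    also have "\<dots> = q ^ Suc j * qbinom q (Suc j) m + q ^ m * qbinom q (Suc j) (Suc m)"
      unfolding Suc by simp
    finally show ?thesis .
  qed
qed

lemma qbinom_root_of_unity_eq_0:
  assumes "q ^ n = 1" "0 < m" "m < n" "q ^ m \<noteq> 1"
  shows "qbinom q n m = 0"
proof -
  obtain j k where n: "n = Suc j" and m: "m = Suc k" using assms by (cases n; cases m) auto
  have "q ^ m * qbinom q n m = q ^ n * qbinom q j k + q ^ m * qbinom q j m"
    using arg_cong[OF qbinom_Suc_Suc'[of q k j], of "(*) q"] unfolding n m by (simp add: algebra_simps)
  also have "\<dots> = qbinom q n m"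
    using assms(1) unfolding n m by simp
  finally have "(q ^ m - 1) * qbinom q n m = 0" by (simp add: algebra_simps)
  then show ?thesis using assms(4) by simp
qed

section \<open>Iterated q-commutators in an algebra\<close>

text \<open>With \<open>A f i = r ^ i * y * f i\<close> and \<open>B f i = r ^ i * f (i + 1) * y\<close> one has \<open>B A = r A B\<close>, and the
  recursion of \<open>iterated_qcommutator_closed_form\<close> reads \<open>F _ (j + 1) = (A - B) (F _ j)\<close>.  Expanding
  \<open>(A - B) ^ j\<close> as \<open>\<Sum>m\<le>j. (-1) ^ m [j, m]\<^sub>r A ^ (j - m) B ^ m\<close> and collecting the powers of \<open>r\<close>
  gives these coefficients.\<close>

definition iterated_qcommutator_coeff :: "'k::field \<Rightarrow> nat \<Rightarrow> nat \<Rightarrow> nat \<Rightarrow> 'k" where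
  "iterated_qcommutator_coeff r i j m = (-1) ^ m * r ^ (i * j + (m choose 2)) * qbinom r j m"

lemma iterated_qcommutator_coeff_0 [simp]: "iterated_qcommutator_coeff r i j 0 = r ^ (i * j)"
  by (simp add: iterated_qcommutator_coeff_def binomial_eq_0)

lemma iterated_qcommutator_coeff_eq_0: "j < m \<Longrightarrow> iterated_qcommutator_coeff r i j m = 0"
  by (simp add: iterated_qcommutator_coeff_def qbinom_eq_0)

lemma iterated_qcommutator_coeff_Suc_Suc:
  "iterated_qcommutator_coeff r i (Suc j) (Suc m)
     = r ^ i * (iterated_qcommutator_coeff r i j (Suc m) - iterated_qcommutator_coeff r (Suc i) j m)"
proof -
  define e where "e = r ^ (i * j + (m choose 2))"
  have choose: "Suc m choose 2 = m + (m choose 2)"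
    by (simp add: numeral_2_eq_2)
  have "iterated_qcommutator_coeff r i (Suc j) (Suc m)
      = - ((-1) ^ m * r ^ i * e * (r ^ m * qbinom r (Suc j) (Suc m)))"
    by (simp add: iterated_qcommutator_coeff_def e_def choose power_add algebra_simps del: qbinom.simps)
  also have "\<dots> = - ((-1) ^ m * r ^ i * e * (r ^ j * qbinom r j m + r ^ m * qbinom r j (Suc m)))"
    by (simp only: qbinom_Suc_Suc')
  also have "\<dots>
      = r ^ i * (iterated_qcommutator_coeff r i j (Suc m) - iterated_qcommutator_coeff r (Suc i) j m)"
    by (simp add: iterated_qcommutator_coeff_def e_def choose power_add algebra_simps)
  finally show ?thesis .
qed

locale k_algebra =
  fixes smul :: "'k::field \<Rightarrow> 'a::{ring, monoid_mult} \<Rightarrow> 'a"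
  assumes kalgebra: "kalgebra smul"
begin

lemma smul_add_left: "smul (c + d) a = smul c a + smul d a"
  using kalgebra by (simp add: kalgebra_def)

lemma smul_add_right: "smul c (a + b) = smul c a + smul c b"
  using kalgebra by (simp add: kalgebra_def)

lemma smul_smul: "smul c (smul d a) = smul (c * d) a"
  using kalgebra by (simp add: kalgebra_def)

lemma smul_one [simp]: "smul 1 a = a"
  using kalgebra by (simp add: kalgebra_def)

lemma smul_mult_left: "smul c a * b = smul c (a * b)"
  using kalgebra by (simp add: kalgebra_def)

lemma smul_mult_right: "a * smul c b = smul c (a * b)"
  by (metis kalgebra kalgebra_def)

lemma smul_zero [simp]: "smul c 0 = 0"
  using smul_add_right[of c 0 0] by simp

lemma smul_zero_left [simp]: "smul 0 a = 0"
  using smul_add_left[of 0 0 a] by simp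

lemma smul_diff_left: "smul (c - d) a = smul c a - smul d a"
  using smul_add_left[of "c - d" d a] by (simp add: eq_diff_eq)

lemma smul_diff_right: "smul c (a - b) = smul c a - smul c b"
  using smul_add_right[of c "a - b" b] by (simp add: eq_diff_eq)

lemma smul_sum: "smul c (\<Sum>x\<in>A. f x) = (\<Sum>x\<in>A. smul c (f x))"
  by (induction A rule: infinite_finite_induct) (simp_all add: smul_add_right)

lemma iterated_qcommutator_closed_form:
  assumes rec: "\<And>i j. j < N \<Longrightarrow> F i (Suc j) = smul (r ^ i) (y * F i j - F (Suc i) j * y)"
  shows "j \<le> N \<Longrightarrow>
    F i j = (\<Sum>m\<le>j. smul (iterated_qcommutator_coeff r i j m) (y ^ (j - m) * F (i + m) 0 * y ^ m))"
proof (induction j arbitrary: i)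
  case 0
  then show ?case by simp
next
  case (Suc j)
  let ?c = "iterated_qcommutator_coeff r"
  define X where "X m = y ^ (Suc j - m) * F (i + m) 0 * y ^ m" for m
  have "y * F i j = (\<Sum>m\<le>j. smul (?c i j m) (X m))"
    using Suc by (simp add: sum_distrib_left X_def Suc_diff_le smul_mult_right mult.assoc)
  also have "\<dots> = (\<Sum>m\<le>Suc j. smul (?c i j m) (X m))"
    by (simp add: iterated_qcommutator_coeff_eq_0)
  finally have left: "y * F i j = smul (?c i j 0) (X 0) + (\<Sum>m\<le>j. smul (?c i j (Suc m)) (X (Suc m)))"
    by (simp only: sum.atMost_Suc_shift)
  have right: "F (Suc i) j * y = (\<Sum>m\<le>j. smul (?c (Suc i) j m) (X (Suc m)))"
    using Suc by (simp add: sum_distrib_right X_def smul_mult_left mult.assoc flip: power_Suc2)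
  have "F i (Suc j) = smul (r ^ i) (y * F i j - F (Suc i) j * y)"
    using Suc by (simp add: rec)
  also have "\<dots> = smul (?c i (Suc j) 0) (X 0) + (\<Sum>m\<le>j. smul (?c i (Suc j) (Suc m)) (X (Suc m)))"
    unfolding left right iterated_qcommutator_coeff_Suc_Suc
    by (simp add: smul_add_right smul_diff_right smul_sum smul_smul smul_diff_left power_add
        mult.commute right_diff_distrib sum_subtractf)
  also have "\<dots> = (\<Sum>m\<le>Suc j. smul (?c i (Suc j) m) (y ^ (Suc j - m) * F (i + m) 0 * y ^ m))"
    unfolding sum.atMost_Suc_shift by (simp add: X_def)
  finally show ?case .
qed

lemma iterated_qcommutator_root_of_unity:
  assumes rec: "\<And>i j. j < N \<Longrightarrow> F i (Suc j) = smul (r ^ i) (y * F i j - F (Suc i) j * y)"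
    and "0 < N" and "r ^ N = 1" and "\<And>m. 0 < m \<Longrightarrow> m < N \<Longrightarrow> r ^ m \<noteq> 1"
  shows "F 0 N = y ^ N * F 0 0 + smul ((-1) ^ N * r ^ (N choose 2)) (F N 0 * y ^ N)"
proof -
  define f where "f m = smul (iterated_qcommutator_coeff r 0 N m) (y ^ (N - m) * F m 0 * y ^ m)" for m
  have "F 0 N = sum f {..N}"
    using iterated_qcommutator_closed_form[of N F r y, OF rec, of N 0] by (simp add: f_def)
  also have "\<dots> = sum f {0, N}"
  proof (rule sum.mono_neutral_right)
    show "\<forall>m\<in>{..N} - {0, N}. f m = 0"
      using assms by (auto simp: f_def iterated_qcommutator_coeff_def qbinom_root_of_unity_eq_0)
  qed auto
  also have "\<dots> = y ^ N * F 0 0 + smul ((-1) ^ N * r ^ (N choose 2)) (F N 0 * y ^ N)"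
    using \<open>0 < N\<close> by (simp add: f_def iterated_qcommutator_coeff_def binomial_eq_0)
  finally show ?thesis .
qed

lemma commute_if_scaled_anticommute:
  assumes "\<And>a. b * a + smul c (a * b) = 0"
  shows "b * a = a * b"
proof -
  have b: "b = - smul c b"
    using assms[of 1] by (simp add: eq_neg_iff_add_eq_0)
  have "a * b = - smul c (a * b)"
    by (subst b) (simp add: smul_mult_right)
  also have "\<dots> = b * a"
    using assms[of a] by (simp add: neg_eq_iff_add_eq_0 add.commute)
  finally show ?thesis by (rule sym)
qed

end

section \<open>Partial actions of the Taft algebra\<close>

lemma finite_tidx [simp]: "finite (tidx n)"
  by (simp add: tidx_def)

lemma mem_tidx [simp]: "(i, j) \<in> tidx n \<longleftrightarrow> i < n \<and> j < n"
  by (simp add: tidx_def)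

lemma sum_pairs_delta:
  assumes "finite A" "x \<in> A"
  shows "(\<Sum>(p, r)\<in>A. if (p, r) = x then F p r else 0) = F (fst x) (snd x)"
proof -
  have "(\<Sum>(p, r)\<in>A. if (p, r) = x then F p r else 0)
      = (\<Sum>y\<in>A. if y = x then F (fst y) (snd y) else 0)"
    by (simp add: split_beta)
  then show ?thesis
    using assms by (simp add: sum.delta)
qed

locale taft_pact = k_algebra smul
  for smul :: "'k::field \<Rightarrow> 'a::{ring, monoid_mult} \<Rightarrow> 'a" +
  fixes n :: nat and q :: 'k and act :: "nat \<times> nat \<Rightarrow> 'a \<Rightarrow> 'a"
  assumes two_le_n: "2 \<le> n"
    and partial_action: "taft_partial_action n q smul act"
begin

lemma act_unit [simp]: "act (0, 0) a = a"
  using partial_action by (simp add: taft_partial_action_def)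

lemma act_zero [simp]: "act r 0 = 0"
  using partial_action unfolding taft_partial_action_def by (metis add_cancel_right_right add_0)

lemma pact_mult:
  "pact n smul act h (a * b) = (\<Sum>(p, r)\<in>tidx n \<times> tidx n. smul (tdelta n q h (p, r)) (act p a * act r b))"
  using partial_action by (simp add: taft_partial_action_def)

lemma pact_pact:
  "pact n smul act h (pact n smul act k a) =
     (\<Sum>(p, r)\<in>tidx n \<times> tidx n.
        smul (tdelta n q h (p, r)) (act p 1 * pact n smul act (tmul n q (tbas r) k) a))"
  using partial_action by (simp add: taft_partial_action_def)

lemma pact_point:
  assumes "r \<in> tidx n"
  shows "pact n smul act (\<lambda>p. if p = r then c else 0) a = smul c (act r a)"
proof -
  have "smul (if s = r then c else 0) (act s a) = (if s = r then smul c (act r a) else 0)" for s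
    by simp
  then show ?thesis
    using assms by (simp add: pact_def sum.delta)
qed

lemma pact_tbas: "r \<in> tidx n \<Longrightarrow> pact n smul act (tbas r) a = act r a"
  using pact_point[of r 1] by (simp add: tbas_def)

lemma tmul_tbas:
  assumes "r \<in> tidx n" "s \<in> tidx n"
  shows "tmul n q (tbas r) (tbas s) = tbasis_mul n q r s"
proof
  fix p
  have inner: "(\<Sum>s'\<in>tidx n. tbas r r' * tbas s s' * tbasis_mul n q r' s' p) =
      (if r' = r then tbasis_mul n q r s p else 0)" for r'
  proof -
    have "tbas r r' * tbas s s' * tbasis_mul n q r' s' p =
        (if s' = s then if r' = r then tbasis_mul n q r s p else 0 else 0)" for s'
      by (simp add: tbas_def)
    then show ?thesis
      using assms by (simp add: sum.delta)
  qed
  show "tmul n q (tbas r) (tbas s) p = tbasis_mul n q r s p"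
    using assms by (simp add: tmul_def inner sum.delta)
qed

lemma pact_tmul_tbas:
  assumes "i < n" "j < n" "k < n" "l < n"
  shows "pact n smul act (tmul n q (tbas (i, j)) (tbas (k, l))) a =
    (if j + l < n then smul (q ^ (j * k)) (act ((i + k) mod n, j + l) a) else 0)"
proof (cases "j + l < n")
  case True
  then have "tbasis_mul n q (i, j) (k, l) = (\<lambda>p. if p = ((i + k) mod n, j + l) then q ^ (j * k) else 0)"
    by (auto simp: tbasis_mul_def)
  then show ?thesis
    using True assms by (simp add: tmul_tbas pact_point)
next
  case False
  then have "tbasis_mul n q (i, j) (k, l) = (\<lambda>p. 0)"
    by (auto simp: tbasis_mul_def)
  then show ?thesis
    using False assms by (simp add: tmul_tbas pact_def)
qed

lemma tdelta_tbas:
  assumes "(i, j) \<in> tidx n"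
  shows "tdelta n q (tbas (i, j)) (p, r) =
     (\<Sum>m\<le>j. if p = ((i + m) mod n, j - m) \<and> r = (i, m) then qbinom q j m else 0)"
proof -
  define S where
    "S i' j' = (\<Sum>m\<le>j'. if p = ((i' + m) mod n, j' - m) \<and> r = (i', m) then qbinom q j' m else 0)"
    for i' j'
  have "tbas (i, j) x * S (fst x) (snd x) = (if x = (i, j) then S (fst x) (snd x) else 0)" for x
    by (simp add: tbas_def)
  then have "tdelta n q (tbas (i, j)) (p, r) = (\<Sum>x\<in>tidx n. if x = (i, j) then S (fst x) (snd x) else 0)"
    unfolding tdelta_def S_def by (simp add: split_beta)
  then show ?thesis
    using assms by (simp add: sum.delta S_def)
qed

lemma tdelta_g:
  "i < n \<Longrightarrow> tdelta n q (tbas (i, 0)) (p, r) = (if (p, r) = ((i, 0), (i, 0)) then 1 else 0)"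
  using two_le_n by (subst tdelta_tbas) auto

lemma tdelta_gx:
  assumes "i < n"
  shows "tdelta n q (tbas (i, 1)) (p, r) = (if (p, r) = ((i, 1), (i, 0)) then 1 else 0)
     + (if (p, r) = (((i + 1) mod n, 0), (i, 1)) then 1 else 0)"
  using assms two_le_n by (subst tdelta_tbas) auto

lemma sum_tdelta_g:
  assumes "i < n"
  shows "(\<Sum>(p, r)\<in>tidx n \<times> tidx n. smul (tdelta n q (tbas (i, 0)) (p, r)) (F p r)) = F (i, 0) (i, 0)"
proof -
  have "(\<Sum>(p, r)\<in>tidx n \<times> tidx n. smul (tdelta n q (tbas (i, 0)) (p, r)) (F p r))
      = (\<Sum>(p, r)\<in>tidx n \<times> tidx n. if (p, r) = ((i, 0), (i, 0)) then F p r else 0)"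
    using assms by (intro sum.cong refl) (auto simp: tdelta_g)
  also have "\<dots> = F (i, 0) (i, 0)"
    using assms two_le_n by (subst sum_pairs_delta) auto
  finally show ?thesis .
qed

lemma sum_tdelta_gx:
  assumes "i < n"
  shows "(\<Sum>(p, r)\<in>tidx n \<times> tidx n. smul (tdelta n q (tbas (i, 1)) (p, r)) (F p r))
    = F (i, 1) (i, 0) + F ((i + 1) mod n, 0) (i, 1)"
proof -
  have "(\<Sum>(p, r)\<in>tidx n \<times> tidx n. smul (tdelta n q (tbas (i, 1)) (p, r)) (F p r))
      = (\<Sum>(p, r)\<in>tidx n \<times> tidx n. if (p, r) = ((i, 1), (i, 0)) then F p r else 0)
      + (\<Sum>(p, r)\<in>tidx n \<times> tidx n. if (p, r) = (((i + 1) mod n, 0), (i, 1)) then F p r else 0)"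
    unfolding sum.distrib[symmetric] tdelta_gx[OF assms]
    by (intro sum.cong refl) (auto simp: smul_add_left)
  also have "\<dots> = F (i, 1) (i, 0) + F ((i + 1) mod n, 0) (i, 1)"
    using assms two_le_n by (subst (1 2) sum_pairs_delta) auto
  finally show ?thesis .
qed

lemma act_g_mult: "i < n \<Longrightarrow> act (i, 0) (a * b) = act (i, 0) a * act (i, 0) b"
  using pact_mult[of "tbas (i, 0)" a b] two_le_n by (simp add: pact_tbas sum_tdelta_g)

lemma act_gx_mult:
  assumes "i < n"
  shows "act (i, 1) (a * b) = act (i, 1) a * act (i, 0) b + act ((i + 1) mod n, 0) a * act (i, 1) b"
  using pact_mult[of "tbas (i, 1)" a b] unfolding sum_tdelta_gx[OF assms]
  using assms two_le_n by (simp add: pact_tbas)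

lemma act_g_act:
  "i < n \<Longrightarrow> k < n \<Longrightarrow> l < n \<Longrightarrow> act (i, 0) (act (k, l) a) = act (i, 0) 1 * act ((i + k) mod n, l) a"
  using pact_pact[of "tbas (i, 0)" "tbas (k, l)" a] by (simp add: pact_tbas sum_tdelta_g pact_tmul_tbas)

lemma act_gx_act:
  assumes "i < n" "k < n" "l < n"
  shows "act (i, 1) (act (k, l) a) = act (i, 1) 1 * act ((i + k) mod n, l) a
     + act ((i + 1) mod n, 0) 1 * (if Suc l < n then smul (q ^ k) (act ((i + k) mod n, Suc l) a) else 0)"
  using pact_pact[of "tbas (i, 1)" "tbas (k, l)" a] unfolding sum_tdelta_gx[OF assms(1)]
  using assms two_le_n by (simp add: pact_tbas pact_tmul_tbas)

end

locale taft_pact_g_one_eq_0 = taft_pact +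
  assumes primitive: "primitive_root q n"
    and g_one: "act (1, 0) 1 = 0"
begin

abbreviation x_one where
  "x_one \<equiv> act (0, 1) 1"

lemma q_nonzero: "q \<noteq> 0"
  using primitive two_le_n by (simp add: primitive_root_nonzero)

lemma act_g_last_eq_0: "act (n - 1, 0) a = 0"
proof -
  have "act (n - 1, 0) 1 = 0"
    using act_g_act[of "n - 1" 1 0 1] two_le_n g_one by simp
  then show ?thesis
    using act_g_mult[of "n - 1" 1 a] two_le_n by simp
qed

lemma act_gx_last: "act (n - 1, 1) a = a * act (n - 1, 1) 1"
  using act_gx_mult[of "n - 1" a 1] act_g_last_eq_0[of 1] two_le_n by simp

lemma act_gx_last_one: "act (n - 1, 1) 1 = - smul q x_one"
  using act_gx_act[of "n - 1" 1 0 1] two_le_n g_one by (simp add: eq_neg_iff_add_eq_0)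

lemma act_commute_gx_last_one:
  assumes "i < n" "j < n"
  shows "act (Suc i mod n, j) a * act (n - 1, 1) 1
    = act (n - 1, 1) 1 * act (i, j) a + smul (q ^ Suc i) (if Suc j < n then act (i, Suc j) a else 0)"
proof -
  have "(n - 1 + Suc i mod n) mod n = (n - 1 + Suc i) mod n"
    by (rule mod_add_right_eq)
  also have "n - 1 + Suc i = n + i"
    using two_le_n by simp
  finally have index: "(n - 1 + Suc i mod n) mod n = i"
    using assms by simp
  have wrap: "(n - 1 + 1) mod n = 0" and q_power: "q ^ (Suc i mod n) = q ^ Suc i"
    using two_le_n primitive by (simp_all add: primitive_root_def power_mod_if_power_eq_1)
  have "act (n - 1, 1) (act (Suc i mod n, j) a)
      = act (n - 1, 1) 1 * act ((n - 1 + Suc i mod n) mod n, j) a + act ((n - 1 + 1) mod n, 0) 1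
        * (if Suc j < n then smul (q ^ (Suc i mod n)) (act ((n - 1 + Suc i mod n) mod n, Suc j) a) else 0)"
    using assms two_le_n by (intro act_gx_act) auto
  then show ?thesis
    unfolding act_gx_last[of "act (Suc i mod n, j) a"] index wrap q_power act_unit mult_1_left
    by (simp only: if_distrib[of "smul _"] smul_zero)
qed

lemma act_x_recurrence:
  assumes "i < n" "j < n"
  shows "(if Suc j < n then act (i, Suc j) a else 0)
    = smul (inverse q ^ i) (x_one * act (i, j) a - act (Suc i mod n, j) a * x_one)"
proof -
  define P where "P = act (Suc i mod n, j) a"
  define Q where "Q = act (i, j) a"
  define T where "T = (if Suc j < n then act (i, Suc j) a else 0)"
  have "smul (q ^ Suc i) T = smul q (x_one * Q - P * x_one)"
    using act_commute_gx_last_one[OF assms, of a] unfolding act_gx_last_one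
    by (simp add: P_def Q_def T_def smul_mult_left smul_mult_right smul_diff_right algebra_simps)
  moreover have "inverse q ^ Suc i * q ^ Suc i = 1"
    using q_nonzero by (metis left_inverse power_mult_distrib power_one)
  ultimately have "T = smul (inverse q ^ Suc i * q) (x_one * Q - P * x_one)"
    by (metis smul_one smul_smul)
  also have "inverse q ^ Suc i * q = inverse q ^ i"
    using q_nonzero by simp
  finally show ?thesis
    by (simp add: T_def P_def Q_def)
qed

lemma x_one_power_commute: "x_one ^ n * a = a * x_one ^ n"
proof (rule commute_if_scaled_anticommute)
  fix b
  define F where "F i j = (if j < n then act (i mod n, j) b else 0)" for i j
  have inverse_primitive: "primitive_root (inverse q) n"
    using primitive by (rule primitive_root_inverse)
  have "F i (Suc j) = smul (inverse q ^ i) (x_one * F i j - F (Suc i) j * x_one)" if "j < n" for i j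
    using act_x_recurrence[of "i mod n" j b] that two_le_n inverse_primitive
    by (simp add: F_def mod_Suc_eq primitive_root_def power_mod_if_power_eq_1)
  then have "F 0 n = x_one ^ n * F 0 0 + smul ((-1) ^ n * inverse q ^ (n choose 2)) (F n 0 * x_one ^ n)"
    using two_le_n inverse_primitive
    by (intro iterated_qcommutator_root_of_unity) (auto simp: primitive_root_def)
  then show "x_one ^ n * b + smul ((-1) ^ n * inverse q ^ (n choose 2)) (b * x_one ^ n) = 0"
    using two_le_n by (simp add: F_def)
qed

lemma act_g_power_x_one:
  assumes i: "i < n"
  shows "act (i, 0) x_one = smul (inverse q ^ i) (act (i, 0) 1 * x_one)"
proof -
  define e where "e = act (i, 0) 1"
  define e' where "e' = act (Suc i mod n, 0) 1"
  have "act (i, 0) x_one = e * act (i, 1) 1"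
    using act_g_act[of i 0 1 1] i two_le_n by (simp add: e_def)
  also have "act (i, 1) 1 = smul (inverse q ^ i) (x_one * e - e' * x_one)"
    using act_x_recurrence[of i 0 1] i two_le_n by (simp add: e_def e'_def)
  finally have "act (i, 0) x_one = smul (inverse q ^ i) (e * x_one * e - e * e' * x_one)"
    by (simp add: smul_mult_right right_diff_distrib mult.assoc)
  moreover have "e * e' = 0"
    using act_g_act[of i 1 0 1] i two_le_n g_one by (simp add: e_def e'_def)
  moreover have "e * x_one * e = e * x_one"
  proof -
    have "act (i, 0) (act ((n - i) mod n, 0) x_one) = e * x_one"
      using act_g_act[of i "(n - i) mod n" 0 x_one] i by (simp add: e_def mod_add_right_eq)
    moreover have "act (i, 0) (act ((n - i) mod n, 0) x_one * 1)
        = act (i, 0) (act ((n - i) mod n, 0) x_one) * e"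
      using act_g_mult[of i "act ((n - i) mod n, 0) x_one" 1] i by (simp add: e_def)
    ultimately show ?thesis by simp
  qed
  ultimately show ?thesis
    by (simp add: e_def)
qed

lemma x_one_eq_0_if_act_g_power_trivial:
  assumes "0 < i" "i < n" and trivial: "\<And>a. act (i, 0) a = a"
  shows "x_one = 0"
proof -
  have "x_one = smul (inverse q ^ i) x_one"
    using act_g_power_x_one[OF \<open>i < n\<close>] trivial by simp
  then have "smul (1 - inverse q ^ i) x_one = 0"
    by (simp add: smul_diff_left)
  moreover have "1 - inverse q ^ i \<noteq> 0"
    using primitive_root_inverse[OF primitive] assms by (simp add: primitive_root_def)
  ultimately show ?thesis
    by (metis smul_smul smul_one smul_zero left_inverse)
qed

end

theorem corollary3p4:
  fixes q :: "'k::field" and n :: nat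
    and smul :: "'k \<Rightarrow> 'a::{ring, monoid_mult} \<Rightarrow> 'a"
    and act :: "nat \<times> nat \<Rightarrow> 'a \<Rightarrow> 'a"
  assumes "n \<ge> 2"
    and "primitive_root q n"
    and "kalgebra smul"
    and "taft_partial_action n q smul act"
    and "act (1, 0) 1 = 0"
  shows "(\<forall>a. (act (0, 1) 1) ^ n * a = a * (act (0, 1) 1) ^ n)
       \<and> (\<forall>i < n. act (i, 0) (act (0, 1) 1) = smul ((inverse q) ^ i) (act (i, 0) 1 * act (0, 1) 1))
       \<and> ((\<exists>i\<in>{2..n-1}. \<forall>a. act (i, 0) a = a) \<longrightarrow> act (0, 1) 1 = 0)"
proof -
  interpret taft_pact_g_one_eq_0 smul n q act
    using assms by unfold_locales (simp_all add: k_algebra_def)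
  have "act (0, 1) 1 = 0" if "i \<in> {2..n-1}" "\<forall>a. act (i, 0) a = a" for i
    using that two_le_n by (intro x_one_eq_0_if_act_g_power_trivial[of i]) auto
  then show ?thesis
    using x_one_power_commute act_g_power_x_one by blast
qed

end
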